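(* Let $(k,|\cdot|)$ be a non-archimedean valued field of characteristic $p\ge0$ with residue field $\bar k$, with $\mathrm{char}(\bar k)>5$ if $p=0$. Let $X$ be a Mumford curve over $k$ of genus $g\in\{5,6,7,8\}$ with $|\mathrm{Aut}(X)|=12(g-1)$, let $G=\mathrm{Aut}(X)$ and let $N$ be the normalizer in $PGL(2,k)$ of the Schottky group of $X$. If $N\cong D_5*_{\mathbf{Z}_5}A_5$, then $g=6$, $p\neq5$ and $G\cong A_5$.
   Context: A Mumford curve of genus $g\ge2$ over $k$ is a smooth projective curve over $k$ whose analytification is isomorphic to $\Gamma\backslash(\mathbf{P}^{1,\mathrm{an}}_k-\mathcal{L})$ for a discrete free subgroup $\Gamma\subseteq PGL(2,k)$ of rank $g$ (its Schottky group) with limit set $\mathcal{L}$; then $\mathrm{Aut}(X)\cong N/\Gamma$ with $N$ the normalizer of $\Gamma$. $D_n$ is the dihedral group of order $2n$, $\mathbf{Z}_n$ cyclic of order $n$, $U*_ZV$ an amalgamated free product; the isomorphism $N\cong\cdots$ is an abstract group isomorphism. *)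

theory Defs
  imports "HOL-Algebra.Algebra" Complex_Main
begin

definition nonarch_valued_field :: "('k::field \<Rightarrow> real) \<Rightarrow> bool" where
  "nonarch_valued_field v \<longleftrightarrow>
     (\<forall>x. v x \<ge> 0) \<and> (\<forall>x. v x = 0 \<longleftrightarrow> x = 0) \<and>
     (\<forall>x y. v (x * y) = v x * v y) \<and>
     (\<forall>x y. v (x + y) \<le> max (v x) (v y)) \<and>
     (\<exists>x. v x \<noteq> 0 \<and> v x \<noteq> 1) \<and>
     (\<forall>s::nat \<Rightarrow> 'k. (\<forall>e>0. \<exists>M. \<forall>m\<ge>M. \<forall>n\<ge>M. v (s m - s n) < e) \<longrightarrow>
         (\<exists>l. \<forall>e>0. \<exists>M. \<forall>n\<ge>M. v (s n - l) < e))"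

text \<open>Characteristic of the residue field {x. v x \<le> 1} / {x. v x < 1}:
  the least positive n with |n \<cdot> 1| < 1, or 0 if there is none.\<close>
definition residue_char :: "('k::field \<Rightarrow> real) \<Rightarrow> nat" where
  "residue_char v = (if \<exists>n>0. v (of_nat n) < 1 then LEAST n. n > 0 \<and> v (of_nat n) < 1 else 0)"

text \<open>A 2x2 matrix (a,b,c,d) stands for [[a,b],[c,d]].\<close>
type_synonym 'k mat22 = "'k \<times> 'k \<times> 'k \<times> 'k"

fun det22 :: "'k::field mat22 \<Rightarrow> 'k" where
  "det22 (a1,a2,a3,a4) = a1*a4 - a2*a3"

fun mmul22 :: "'k::field mat22 \<Rightarrow> 'k mat22 \<Rightarrow> 'k mat22" where
  "mmul22 (a1,a2,a3,a4) (b1,b2,b3,b4) = (a1*b1 + a2*b3, a1*b2 + a2*b4, a3*b1 + a4*b3, a3*b2 + a4*b4)"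

fun smul22 :: "'k::field \<Rightarrow> 'k mat22 \<Rightarrow> 'k mat22" where
  "smul22 t (a1,a2,a3,a4) = (t*a1, t*a2, t*a3, t*a4)"

text \<open>An element of PGL(2,k) is the class of an invertible matrix modulo nonzero scalars.\<close>
definition pclass :: "'k::field mat22 \<Rightarrow> 'k mat22 set" where
  "pclass m = {smul22 t m | t. t \<noteq> 0}"

definition PGL2 :: "('k::field mat22 set) monoid" where
  "PGL2 = \<lparr> carrier = {pclass m | m. det22 m \<noteq> 0},
            monoid.mult = (\<lambda>P Q. pclass (mmul22 (SOME m. m \<in> P) (SOME n. n \<in> Q))),
            one = pclass (1,0,0,1) \<rparr>"

text \<open>Discreteness of a subgroup of PGL(2,k) for the topology induced by v
  (quotient topology of GL(2,k)): the identity is isolated.\<close>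
definition discrete_subgroup :: "('k::field \<Rightarrow> real) \<Rightarrow> 'k mat22 set set \<Rightarrow> bool" where
  "discrete_subgroup v \<Gamma> \<longleftrightarrow>
     (\<exists>e>0. \<forall>\<gamma>\<in>\<Gamma>. (\<exists>(a1,a2,a3,a4)\<in>\<gamma>. v (a1 - 1) < e \<and> v a2 < e \<and> v a3 < e \<and> v (a4 - 1) < e)
                     \<longrightarrow> \<gamma> = \<one>\<^bsub>PGL2\<^esub>)"

definition word_eval :: "('a, 'b) monoid_scheme \<Rightarrow> ('a \<times> bool) list \<Rightarrow> 'a" where
  "word_eval G w = foldr (\<lambda>(s,e) acc. (if e then s else inv\<^bsub>G\<^esub> s) \<otimes>\<^bsub>G\<^esub> acc) w \<one>\<^bsub>G\<^esub>"

definition reduced_word :: "('a \<times> bool) list \<Rightarrow> bool" where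
  "reduced_word w \<longleftrightarrow> (\<forall>i. Suc i < length w \<longrightarrow>
       \<not> (fst (w!i) = fst (w!Suc i) \<and> snd (w!i) \<noteq> snd (w!Suc i)))"

definition free_subgroup_of_rank :: "('a, 'b) monoid_scheme \<Rightarrow> 'a set \<Rightarrow> nat \<Rightarrow> bool" where
  "free_subgroup_of_rank G H g \<longleftrightarrow> subgroup H G \<and>
     (\<exists>S. S \<subseteq> H \<and> finite S \<and> card S = g \<and> generate G S = H \<and>
        (\<forall>w. w \<noteq> [] \<and> set (map fst w) \<subseteq> S \<and> reduced_word w \<longrightarrow> word_eval G w \<noteq> \<one>\<^bsub>G\<^esub>))"

definition schottky_group :: "('k::field \<Rightarrow> real) \<Rightarrow> 'k mat22 set set \<Rightarrow> nat \<Rightarrow> bool" where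
  "schottky_group v \<Gamma> g \<longleftrightarrow> free_subgroup_of_rank PGL2 \<Gamma> g \<and> discrete_subgroup v \<Gamma>"

text \<open>The normalizer N of \<Gamma> in PGL(2,k), as a group, and N/\<Gamma> (\<cong> Aut(X)).\<close>
definition normalizer_group :: "'k::field mat22 set set \<Rightarrow> ('k mat22 set) monoid" where
  "normalizer_group \<Gamma> = PGL2\<lparr>carrier := normalizer PGL2 \<Gamma>\<rparr>"

definition aut_group :: "'k::field mat22 set set \<Rightarrow> ('k mat22 set set) monoid" where
  "aut_group \<Gamma> = normalizer_group \<Gamma> Mod \<Gamma>"

definition is_dihedral :: "('a, 'b) monoid_scheme \<Rightarrow> nat \<Rightarrow> bool" where
  "is_dihedral G n \<longleftrightarrow> group G \<and> finite (carrier G) \<and> order G = 2 * n \<and>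
     (\<exists>r s. r \<in> carrier G \<and> s \<in> carrier G \<and> group.ord G r = n \<and> group.ord G s = 2 \<and>
        s \<otimes>\<^bsub>G\<^esub> r \<otimes>\<^bsub>G\<^esub> inv\<^bsub>G\<^esub> s = inv\<^bsub>G\<^esub> r \<and> generate G {r, s} = carrier G)"

definition is_cyclic_of_order :: "('a, 'b) monoid_scheme \<Rightarrow> nat \<Rightarrow> bool" where
  "is_cyclic_of_order G n \<longleftrightarrow> group G \<and> finite (carrier G) \<and> order G = n \<and>
     (\<exists>c\<in>carrier G. generate G {c} = carrier G)"

text \<open>Internal amalgamated free product: N is the amalgamated free product of its
  subgroups U and V over Z = U \<inter> V (the canonical map U *_Z V \<rightarrow> N is an isomorphism):
  U \<union> V generates N and no nonempty alternating word in (U - Z) and (V - Z)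
  multiplies to 1 (normal form theorem).\<close>
definition alternating :: "'a set \<Rightarrow> 'a set \<Rightarrow> 'a list \<Rightarrow> bool" where
  "alternating A B xs \<longleftrightarrow> set xs \<subseteq> A \<union> B \<and>
     (\<forall>i. Suc i < length xs \<longrightarrow> (xs!i \<in> A \<and> xs!Suc i \<in> B) \<or> (xs!i \<in> B \<and> xs!Suc i \<in> A))"

definition internal_amalgam :: "('a, 'b) monoid_scheme \<Rightarrow> 'a set \<Rightarrow> 'a set \<Rightarrow> bool" where
  "internal_amalgam N U V \<longleftrightarrow> group N \<and> subgroup U N \<and> subgroup V N \<and>
     generate N (U \<union> V) = carrier N \<and>
     (\<forall>xs. xs \<noteq> [] \<and> alternating (U - (U \<inter> V)) (V - (U \<inter> V)) xs \<longrightarrow>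
        foldr (\<otimes>\<^bsub>N\<^esub>) xs \<one>\<^bsub>N\<^esub> \<noteq> \<one>\<^bsub>N\<^esub>)"

definition iso_D5_amalg_Z5_A5 :: "('a, 'b) monoid_scheme \<Rightarrow> bool" where
  "iso_D5_amalg_Z5_A5 N \<longleftrightarrow>
     (\<exists>U V. internal_amalgam N U V \<and>
        is_dihedral (N\<lparr>carrier := U\<rparr>) 5 \<and>
        (N\<lparr>carrier := V\<rparr>) \<cong> alt_group 5 \<and>
        is_cyclic_of_order (N\<lparr>carrier := U \<inter> V\<rparr>) 5)"

end

theory Submission
  imports Defs
begin

text \<open>
  The Schottky group \<open>\<Gamma>\<close> is free, hence torsion-free, so every finite subgroup of its
  normalizer \<open>N\<close> embeds into \<open>Aut(X) = N/\<Gamma>\<close>. The factor \<open>A\<^sub>5\<close> of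
  \<open>N = D\<^sub>5 *\<^bsub>Z\<^sub>5\<^esub> A\<^sub>5\<close> thus gives \<open>60 | 12(g - 1)\<close>, so \<open>g = 6\<close> and
  \<open>A\<^sub>5 \<cong> Aut(X)\<close>. In characteristic 5 the generator of \<open>Z\<^sub>5\<close> is unipotent, with a
  unique fixed point on the projective line. Involutions \<open>s \<in> D\<^sub>5\<close> and \<open>t \<in> A\<^sub>5\<close>
  normalizing \<open>Z\<^sub>5\<close> fix that point, so \<open>s t\<close> is unipotent as well and
  \<open>(s t)\<^sup>5 = 1\<close>, contradicting the normal form in the amalgamated product.
\<close>

lemma pclass_self: "m \<in> pclass m"
  unfolding pclass_def by (cases m) (auto intro!: exI[of _ 1])

lemma smul22_smul22: "smul22 t (smul22 u m) = smul22 (t * u) m"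
  by (cases m) (simp add: mult.assoc)

lemma smul22_1 [simp]: "smul22 1 m = m"
  by (cases m) simp

lemma pclass_eq_iff: "pclass m = pclass n \<longleftrightarrow> (\<exists>t. t \<noteq> 0 \<and> n = smul22 t m)"
proof
  assume "pclass m = pclass n"
  then have "n \<in> pclass m" using pclass_self[of n] by simp
  then show "\<exists>t. t \<noteq> 0 \<and> n = smul22 t m" unfolding pclass_def by auto
next
  assume "\<exists>t. t \<noteq> 0 \<and> n = smul22 t m"
  then obtain t where t: "t \<noteq> 0" "n = smul22 t m" by auto
  have "smul22 u m = smul22 (u / t) n" "smul22 u n = smul22 (u * t) m" for u
    using t by (simp_all add: smul22_smul22)
  with t show "pclass m = pclass n"
    unfolding pclass_def by (metis (no_types, opaque_lifting) divide_eq_0_iff mult_eq_0_iff)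
qed

lemma pclass_smul22 [simp]: "t \<noteq> 0 \<Longrightarrow> pclass (smul22 t m) = pclass m"
  unfolding pclass_eq_iff by (auto intro!: exI[of _ "inverse t"] simp: smul22_smul22)

lemma mmul22_smul22_left [simp]: "mmul22 (smul22 t a) b = smul22 t (mmul22 a b)"
  by (cases a; cases b) (simp add: algebra_simps)

lemma mmul22_smul22_right [simp]: "mmul22 a (smul22 t b) = smul22 t (mmul22 a b)"
  by (cases a; cases b) (simp add: algebra_simps)

lemma mmul22_assoc: "mmul22 (mmul22 a b) c = mmul22 a (mmul22 b c)"
  by (cases a; cases b; cases c) (simp add: algebra_simps)

lemma det22_mmul22: "det22 (mmul22 a b) = det22 a * det22 b"
  by (cases a; cases b) (simp add: algebra_simps)

lemma mmul22_scalar_left [simp]: "mmul22 (e, 0, 0, e) a = smul22 e a"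
  by (cases a) simp

lemma mmul22_scalar_right [simp]: "mmul22 a (e, 0, 0, e) = smul22 e a"
  by (cases a) (simp add: mult.commute)

lemma PGL2_mult: "pclass a \<otimes>\<^bsub>PGL2\<^esub> pclass b = pclass (mmul22 a b)"
proof -
  have "(SOME x. x \<in> pclass m) \<in> pclass m" for m :: "'a mat22"
    using pclass_self by (metis someI)
  then obtain t u where "t \<noteq> 0" "(SOME x. x \<in> pclass a) = smul22 t a"
    and "u \<noteq> 0" "(SOME x. x \<in> pclass b) = smul22 u b"
    unfolding pclass_def by blast
  then show ?thesis
    unfolding PGL2_def by simp
qed

lemma PGL2_one: "\<one>\<^bsub>PGL2\<^esub> = pclass (1, 0, 0, 1)"
  by (simp add: PGL2_def)

lemma PGL2_carrier: "x \<in> carrier PGL2 \<longleftrightarrow> (\<exists>m. det22 m \<noteq> 0 \<and> x = pclass m)"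
  by (auto simp: PGL2_def)

lemma pclass_in_PGL2: "det22 m \<noteq> 0 \<Longrightarrow> pclass m \<in> carrier PGL2"
  unfolding PGL2_carrier by blast

lemma pclass_eq_one_iff: "pclass m = \<one>\<^bsub>PGL2\<^esub> \<longleftrightarrow> (\<exists>e. e \<noteq> 0 \<and> m = (e, 0, 0, e))"
proof
  assume "pclass m = \<one>\<^bsub>PGL2\<^esub>"
  then obtain t where "t \<noteq> 0" "(1, 0, 0, 1) = smul22 t m"
    unfolding PGL2_one pclass_eq_iff by blast
  then show "\<exists>e. e \<noteq> 0 \<and> m = (e, 0, 0, e)"
    by (cases m) (auto, metis mult_left_cancel)
next
  assume "\<exists>e. e \<noteq> 0 \<and> m = (e, 0, 0, e)"
  then obtain e where "e \<noteq> 0" "m = smul22 e (1, 0, 0, 1)" by auto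
  then show "pclass m = \<one>\<^bsub>PGL2\<^esub>"
    by (metis PGL2_one pclass_smul22)
qed

fun adj22 :: "'k::field mat22 \<Rightarrow> 'k mat22" where
  "adj22 (a1, a2, a3, a4) = (a4, - a2, - a3, a1)"

lemma mmul22_adj22: "mmul22 (adj22 a) a = (det22 a, 0, 0, det22 a)"
  by (cases a) (simp add: algebra_simps)

lemma det22_adj22: "det22 (adj22 a) = det22 a"
  by (cases a) (simp add: algebra_simps)

lemma group_PGL2: "group (PGL2 :: 'k::field mat22 set monoid)"
proof (rule groupI)
  fix x y :: "'k mat22 set"
  assume "x \<in> carrier PGL2" "y \<in> carrier PGL2"
  then show "x \<otimes>\<^bsub>PGL2\<^esub> y \<in> carrier PGL2"
    unfolding PGL2_carrier by (metis PGL2_mult det22_mmul22 mult_eq_0_iff)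
next
  show "\<one>\<^bsub>PGL2\<^esub> \<in> carrier (PGL2 :: 'k mat22 set monoid)"
    unfolding PGL2_carrier PGL2_one by force
next
  fix x y z :: "'k mat22 set"
  assume "x \<in> carrier PGL2" "y \<in> carrier PGL2" "z \<in> carrier PGL2"
  then show "x \<otimes>\<^bsub>PGL2\<^esub> y \<otimes>\<^bsub>PGL2\<^esub> z = x \<otimes>\<^bsub>PGL2\<^esub> (y \<otimes>\<^bsub>PGL2\<^esub> z)"
    unfolding PGL2_carrier by (auto simp only: PGL2_mult mmul22_assoc)
next
  fix x :: "'k mat22 set"
  assume "x \<in> carrier PGL2"
  then obtain a where a: "det22 a \<noteq> 0" "x = pclass a"
    by (auto simp: PGL2_carrier)
  then show "\<one>\<^bsub>PGL2\<^esub> \<otimes>\<^bsub>PGL2\<^esub> x = x"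
    by (simp add: PGL2_one PGL2_mult)
  have "pclass (adj22 a) \<in> carrier PGL2" "pclass (adj22 a) \<otimes>\<^bsub>PGL2\<^esub> x = \<one>\<^bsub>PGL2\<^esub>"
    using a by (auto simp: pclass_in_PGL2 det22_adj22 PGL2_mult mmul22_adj22 pclass_eq_one_iff)
  then show "\<exists>y\<in>carrier PGL2. y \<otimes>\<^bsub>PGL2\<^esub> x = \<one>\<^bsub>PGL2\<^esub>" by blast
qed

lemma inv_pclass: "det22 m \<noteq> 0 \<Longrightarrow> inv\<^bsub>PGL2\<^esub> (pclass m) = pclass (adj22 m)"
  by (rule group.inv_equality[OF group_PGL2])
    (auto simp: PGL2_mult mmul22_adj22 pclass_eq_one_iff pclass_in_PGL2 det22_adj22)

primrec mpow22 :: "'k::field mat22 \<Rightarrow> nat \<Rightarrow> 'k mat22" where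
  "mpow22 m 0 = (1, 0, 0, 1)"
| "mpow22 m (Suc n) = mmul22 (mpow22 m n) m"

lemma pclass_pow: "pclass m [^]\<^bsub>PGL2\<^esub> (n::nat) = pclass (mpow22 m n)"
  by (induction n) (simp_all add: PGL2_one PGL2_mult)

lemma det22_mpow22: "det22 (mpow22 m n) = det22 m ^ n"
  by (induction n) (simp_all add: det22_mmul22)

section \<open>Free groups are torsion-free\<close>

definition cancels :: "'a \<times> bool \<Rightarrow> 'a \<times> bool \<Rightarrow> bool" where
  "cancels a b \<longleftrightarrow> fst a = fst b \<and> snd a \<noteq> snd b"

lemma cancels_sym: "cancels a b \<longleftrightarrow> cancels b a"
  by (auto simp: cancels_def)

lemma reduced_word_Nil [simp]: "reduced_word []"
  by (simp add: reduced_word_def)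

lemma all_Suc_less_Suc_iff:
  "(\<forall>i. Suc i < Suc n \<longrightarrow> Q i) \<longleftrightarrow> (0 < n \<longrightarrow> Q 0) \<and> (\<forall>i. Suc i < n \<longrightarrow> Q (Suc i))"
  by (metis less_Suc_eq_0_disj not0_implies_Suc not_less_eq zero_less_Suc)

lemma reduced_word_Cons:
  "reduced_word (a # w) \<longleftrightarrow> reduced_word w \<and> (w = [] \<or> \<not> cancels a (hd w))"
  unfolding reduced_word_def length_Cons all_Suc_less_Suc_iff by (cases w) (auto simp: cancels_def)

lemma reduced_word_append:
  "reduced_word (u @ v) \<longleftrightarrow>
     reduced_word u \<and> reduced_word v \<and> (u = [] \<or> v = [] \<or> \<not> cancels (last u) (hd v))"
  by (induction u) (auto simp: reduced_word_Cons)

lemma not_reduced_word_split: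
  "\<not> reduced_word w \<Longrightarrow> \<exists>u a b v. w = u @ a # b # v \<and> cancels a b"
proof (induction w)
  case (Cons c w)
  show ?case
  proof (cases "reduced_word w")
    case True
    with Cons.prems obtain b v where "w = b # v" "cancels c b"
      by (cases w) (auto simp: reduced_word_Cons)
    then show ?thesis by (metis append_Nil)
  next
    case False
    with Cons.IH show ?thesis by (metis append_Cons)
  qed
qed simp

definition letter :: "('a, 'b) monoid_scheme \<Rightarrow> 'a \<times> bool \<Rightarrow> 'a" where
  "letter G a = (if snd a then fst a else inv\<^bsub>G\<^esub> (fst a))"

lemma word_eval_Nil [simp]: "word_eval G [] = \<one>\<^bsub>G\<^esub>"
  by (simp add: word_eval_def)

lemma word_eval_Cons [simp]: "word_eval G (a # w) = letter G a \<otimes>\<^bsub>G\<^esub> word_eval G w"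
  by (cases a) (simp add: word_eval_def letter_def)

context group
begin

lemma letter_closed [simp]: "fst a \<in> carrier G \<Longrightarrow> letter G a \<in> carrier G"
  by (simp add: letter_def)

lemma word_eval_closed [simp]: "fst ` set w \<subseteq> carrier G \<Longrightarrow> word_eval G w \<in> carrier G"
  by (induction w) auto

lemma word_eval_append:
  "fst ` set u \<subseteq> carrier G \<Longrightarrow> fst ` set v \<subseteq> carrier G \<Longrightarrow>
     word_eval G (u @ v) = word_eval G u \<otimes> word_eval G v"
  by (induction u) (auto simp: m_assoc)

lemma letter_cancels: "fst a \<in> carrier G \<Longrightarrow> cancels a b \<Longrightarrow> letter G a \<otimes> letter G b = \<one>"
  by (cases a; cases b) (auto simp: cancels_def letter_def)

lemma word_eval_cancel:
  assumes "fst ` set (u @ a # b # v) \<subseteq> carrier G" "cancels a b"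
  shows "word_eval G (u @ a # b # v) = word_eval G (u @ v)"
proof -
  have G: "fst a \<in> carrier G" "fst b \<in> carrier G" "fst ` set u \<subseteq> carrier G" "fst ` set v \<subseteq> carrier G"
    using assms(1) by auto
  then have "word_eval G (a # b # v) = (letter G a \<otimes> letter G b) \<otimes> word_eval G v"
    by (simp add: m_assoc)
  also have "\<dots> = word_eval G v"
    using G assms(2) by (simp add: letter_cancels)
  finally show ?thesis
    using G by (simp add: word_eval_append del: word_eval_Cons)
qed

lemma generate_word_eval:
  assumes "S \<subseteq> carrier G" "x \<in> generate G S"
  shows "\<exists>w. fst ` set w \<subseteq> S \<and> word_eval G w = x"
  using assms(2)
proof (induction rule: generate.induct)
  case one
  show ?case by (auto intro: exI[of _ "[]"])
next
  case (incl h)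
  then show ?case using assms(1)
    by (auto intro!: exI[of _ "[(h, True)]"] simp: letter_def)
next
  case (inv h)
  then show ?case using assms(1)
    by (auto intro!: exI[of _ "[(h, False)]"] simp: letter_def)
next
  case (eng h1 h2)
  then obtain u v where "fst ` set u \<subseteq> S" "word_eval G u = h1" "fst ` set v \<subseteq> S" "word_eval G v = h2"
    by blast
  with assms(1) show ?case
    by (intro exI[of _ "u @ v"]) (auto simp: word_eval_append)
qed

text \<open>A shortest word representing an element is reduced.\<close>
lemma generate_reduced_word_eval:
  assumes "S \<subseteq> carrier G" "x \<in> generate G S"
  shows "\<exists>w. reduced_word w \<and> fst ` set w \<subseteq> S \<and> word_eval G w = x"
proof -
  define P where "P w \<longleftrightarrow> fst ` set w \<subseteq> S \<and> word_eval G w = x" for w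
  obtain w where "P w" using generate_word_eval[OF assms] unfolding P_def by blast
  then obtain w where w: "P w" and shortest: "\<And>w'. P w' \<Longrightarrow> length w \<le> length w'"
    using ex_has_least_nat[of P w length] by blast
  have "reduced_word w"
  proof (rule ccontr)
    assume "\<not> reduced_word w"
    then obtain u a b v where uv: "w = u @ a # b # v" "cancels a b"
      using not_reduced_word_split by blast
    moreover have "fst ` set w \<subseteq> carrier G"
      using w assms(1) unfolding P_def by blast
    ultimately have "P (u @ v)"
      using w unfolding P_def by (auto simp: word_eval_cancel)
    with shortest uv(1) show False by fastforce
  qed
  with w show ?thesis unfolding P_def by blast
qed

lemma word_eval_replicate:
  "fst ` set w \<subseteq> carrier G \<Longrightarrow> word_eval G (concat (replicate n w)) = word_eval G w [^] n"
proof (induction n)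
  case (Suc n)
  have "set (concat (replicate n w)) \<subseteq> set w"
    by (induction n) auto
  with Suc.prems have "fst ` set (concat (replicate n w)) \<subseteq> carrier G"
    by blast
  with Suc show ?case
    by (simp add: word_eval_append del: set_concat flip: nat_pow_Suc2)
qed simp

end

lemma reduced_word_replicate:
  assumes "reduced_word w" "w \<noteq> []" "\<not> cancels (last w) (hd w)"
  shows "reduced_word (concat (replicate n w))"
proof (induction n)
  case (Suc n)
  then show ?case
    using assms by (cases n) (simp_all add: reduced_word_append)
qed simp

lemma (in group) conj_nat_pow:
  "g \<in> carrier G \<Longrightarrow> y \<in> carrier G \<Longrightarrow> (g \<otimes> y \<otimes> inv g) [^] (n::nat) = g \<otimes> y [^] n \<otimes> inv g"
proof (induction n)
  case (Suc n)
  have "(g \<otimes> y \<otimes> inv g) [^] Suc n = g \<otimes> y [^] n \<otimes> inv g \<otimes> (g \<otimes> y \<otimes> inv g)"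
    using Suc by simp
  also have "\<dots> = g \<otimes> (y [^] n \<otimes> ((inv g \<otimes> g) \<otimes> (y \<otimes> inv g)))"
    using Suc.prems by (simp only: m_assoc nat_pow_closed inv_closed m_closed)
  also have "\<dots> = g \<otimes> (y [^] n \<otimes> y) \<otimes> inv g"
    using Suc.prems by (simp add: m_assoc)
  finally show ?case
    by simp
qed simp

definition torsion_free :: "('a, 'b) monoid_scheme \<Rightarrow> 'a set \<Rightarrow> bool" where
  "torsion_free G H \<longleftrightarrow> (\<forall>x\<in>H. \<forall>n::nat. 0 < n \<longrightarrow> x [^]\<^bsub>G\<^esub> n = \<one>\<^bsub>G\<^esub> \<longrightarrow> x = \<one>\<^bsub>G\<^esub>)"

text \<open>A cyclically reduced word has reduced powers; any other reduced word is a conjugate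
  of a shorter one.\<close>
lemma (in group) free_word_pow_ne_one:
  assumes free: "\<And>w. w \<noteq> [] \<Longrightarrow> fst ` set w \<subseteq> S \<Longrightarrow> reduced_word w \<Longrightarrow> word_eval G w \<noteq> \<one>"
    and S: "S \<subseteq> carrier G" and n: "0 < (n::nat)"
  shows "reduced_word w \<Longrightarrow> w \<noteq> [] \<Longrightarrow> fst ` set w \<subseteq> S \<Longrightarrow> word_eval G w [^] n \<noteq> \<one>"
proof (induction "length w" arbitrary: w rule: less_induct)
  case less
  then have wG: "fst ` set w \<subseteq> carrier G" using S by blast
  show ?case
  proof (cases "cancels (last w) (hd w)")
    case False
    have "fst ` set (concat (replicate n w)) \<subseteq> S" "concat (replicate n w) \<noteq> []"
      using less.prems n by (auto simp: gr0_conv_Suc)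
    with free reduced_word_replicate[OF less.prems(1,2) False] show ?thesis
      by (metis word_eval_replicate[OF wG])
  next
    case True
    then obtain a m b where w: "w = a # m @ [b]"
      using less.prems(2) by (metis cancels_def append_butlast_last_id last_ConsL list.collapse
          neq_Nil_conv)
    have "m \<noteq> []"
      using less.prems(1) True w by (auto simp: reduced_word_Cons cancels_sym)
    moreover have "reduced_word m" "fst ` set m \<subseteq> S"
      using less.prems(1,3) w by (auto simp: reduced_word_Cons reduced_word_append)
    ultimately have IH: "word_eval G m [^] n \<noteq> \<one>"
      using less.hyps w by simp
    have aG: "fst a \<in> carrier G" and mG: "fst ` set m \<subseteq> carrier G" and bG: "fst b \<in> carrier G"
      using wG w by auto
    have "cancels b a"
      using True w by simp
    then have "letter G b \<otimes> letter G a = \<one>"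
      by (rule letter_cancels[OF bG])
    then have "letter G b = inv (letter G a)"
      using aG bG by (intro inv_equality[symmetric]) simp_all
    then have "word_eval G w = letter G a \<otimes> word_eval G m \<otimes> inv (letter G a)"
      using aG mG bG w by (simp add: word_eval_append m_assoc)
    moreover have "letter G a \<otimes> word_eval G m [^] n \<otimes> inv (letter G a) \<noteq> \<one>"
      using IH aG mG by (simp add: inv_solve_right')
    ultimately show ?thesis
      using aG mG by (simp add: conj_nat_pow)
  qed
qed

lemma (in group) free_subgroup_torsion_free:
  assumes "free_subgroup_of_rank G H r"
  shows "torsion_free G H"
  unfolding torsion_free_def
proof (intro ballI allI impI)
  fix x and n :: nat
  assume x: "x \<in> H" and n: "0 < n" and xn: "x [^] n = \<one>"
  obtain S where S: "S \<subseteq> H" "generate G S = H"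
    and free: "\<And>w. w \<noteq> [] \<Longrightarrow> fst ` set w \<subseteq> S \<Longrightarrow> reduced_word w \<Longrightarrow> word_eval G w \<noteq> \<one>"
    using assms unfolding free_subgroup_of_rank_def by auto
  have SG: "S \<subseteq> carrier G"
    using S(1) assms subgroup.subset unfolding free_subgroup_of_rank_def by blast
  obtain w where w: "reduced_word w" "fst ` set w \<subseteq> S" "word_eval G w = x"
    using generate_reduced_word_eval[OF SG] x S(2) by blast
  show "x = \<one>"
  proof (cases "w = []")
    case False
    with free_word_pow_ne_one[OF free SG n w(1) _ w(2)] w(3) xn show ?thesis by blast
  qed (use w in simp)
qed

section \<open>Finite subgroups of quotients by torsion-free normal subgroups\<close>

context group
begin

lemma torsion_free_inj_on_rcosets:
  assumes N: "N \<lhd> G" and tf: "torsion_free G N" and V: "subgroup V G" "finite V"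
  shows "inj_on (\<lambda>a. N #> a) V"
proof
  fix x y assume xy: "x \<in> V" "y \<in> V" "N #> x = N #> y"
  have G: "x \<in> carrier G" "y \<in> carrier G"
    using xy subgroup.subset[OF V(1)] by blast+
  have N_sub: "subgroup N G"
    using N by (rule normal_imp_subgroup)
  define z where "z = x \<otimes> inv y"
  have "x \<in> N #> y"
    using rcos_self[OF G(1) N_sub] xy(3) by simp
  then have "z \<in> N"
    unfolding z_def by (rule subgroup.rcos_module_imp[OF N_sub is_group G(2)])
  moreover have "z \<in> V"
    using xy V(1) unfolding z_def by (simp add: subgroup.m_closed subgroup.m_inv_closed)
  then have "z [^] card V = \<one>"
    using group.pow_order_eq_1[OF subgroup_imp_group[OF V(1)], of z]
    unfolding order_def nat_pow_consistent[symmetric] by simp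
  moreover have "0 < card V"
    using V subgroup.one_closed card_gt_0_iff by blast
  ultimately have "z = \<one>"
    using tf unfolding torsion_free_def by blast
  then show "x = y"
    using G inv_solve_right'[of \<one> x y] unfolding z_def by simp
qed

lemma torsion_free_Mod_finite_subgroup:
  assumes N: "N \<lhd> G" and tf: "torsion_free G N" and V: "subgroup V G" "finite V"
  shows "card V dvd order (G Mod N)"
    and "card V = order (G Mod N) \<Longrightarrow> G Mod N \<cong> G\<lparr>carrier := V\<rparr>"
proof -
  let ?h = "\<lambda>a. N #> a"
  have "?h \<in> hom (G\<lparr>carrier := V\<rparr>) (G Mod N)"
    using normal.r_coset_hom_Mod[OF N] subgroup.subset[OF V(1)]
    unfolding hom_def by (auto simp: Pi_def subsetD)
  then interpret h: group_hom "G\<lparr>carrier := V\<rparr>" "G Mod N" ?h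
    using subgroup_imp_group[OF V(1)] normal.factorgroup_is_group[OF N]
    by (simp add: group_hom_def group_hom_axioms_def)
  have inj: "inj_on ?h V"
    by (rule torsion_free_inj_on_rcosets[OF assms])
  have img: "subgroup (?h ` V) (G Mod N)"
    using h.subgroup_img_is_subgroup[OF group.subgroup_self[OF h.G.is_group]] by simp
  have card_img: "card (?h ` V) = card V"
    using card_image[OF inj] .
  show "card V dvd order (G Mod N)"
    using group.lagrange[OF h.H.is_group img] card_img by (metis dvd_triv_right)
  assume card_eq: "card V = order (G Mod N)"
  have "?h ` V = carrier (G Mod N)"
  proof (rule card_subset_eq)
    have "0 < card V"
      using V subgroup.one_closed card_gt_0_iff by blast
    then show "finite (carrier (G Mod N))"
      using card_eq unfolding order_def by (simp add: card_ge_0_finite)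
    show "?h ` V \<subseteq> carrier (G Mod N)"
      using img by (rule subgroup.subset)
    show "card (?h ` V) = card (carrier (G Mod N))"
      using card_img card_eq by (simp add: order_def)
  qed
  then have "?h \<in> iso (G\<lparr>carrier := V\<rparr>) (G Mod N)"
    using inj h.homh by (simp add: iso_iff)
  then have "G\<lparr>carrier := V\<rparr> \<cong> G Mod N"
    unfolding is_iso_def by blast
  then show "G Mod N \<cong> G\<lparr>carrier := V\<rparr>"
    by (rule group.iso_sym[OF h.G.is_group])
qed

lemma torsion_free_Mod_alt_group_5:
  assumes N: "N \<lhd> G" and tf: "torsion_free G N"
    and V: "subgroup V G" "G\<lparr>carrier := V\<rparr> \<cong> alt_group 5"
    and order: "order (G Mod N) = 12 * (g - 1)" and g: "g \<in> {5, 6, 7, 8}"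
  shows "g = 6" and "G Mod N \<cong> alt_group 5"
proof -
  have card_V: "card V = 60"
    using iso_same_card[OF V(2)] alt_group_card_carrier[of 5] by (simp add: fact_numeral)
  then have "finite V"
    using card.infinite by force
  note Mod = torsion_free_Mod_finite_subgroup[OF N tf V(1) this]
  show "g = 6"
    using Mod(1) g unfolding card_V order by auto
  then show "G Mod N \<cong> alt_group 5"
    using Mod(2) card_V order V(2) iso_trans by auto
qed

end

context group
begin

lemma index_two_subgroup_normal:
  assumes H: "subgroup H G" and fin: "finite (carrier G)" and card: "order G = 2 * card H"
  shows "H \<lhd> G"
  unfolding normal_inv_iff
proof (intro conjI H ballI)
  fix x h assume x: "x \<in> carrier G" and h: "h \<in> H"
  have HG: "H \<subseteq> carrier G"
    using H by (rule subgroup.subset)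
  show "x \<otimes> h \<otimes> inv x \<in> H"
  proof (cases "x \<in> H")
    case True
    with h H show ?thesis
      by (simp add: subgroup.m_closed subgroup.m_inv_closed)
  next
    case False
    have "0 < card H"
      using subgroup.one_closed[OF H] fin HG by (auto simp: card_gt_0_iff finite_subset)
    then have two_cosets: "card (rcosets H) = 2"
      using lagrange[OF H] card by simp
    have "rcosets H = {H, H #> x}"
    proof (rule card_subset_eq[symmetric])
      show "finite (rcosets H)"
        using two_cosets by (simp add: card_ge_0_finite)
      show "{H, H #> x} \<subseteq> rcosets H"
        using rcosetsI[OF HG x] rcosetsI[OF HG one_closed] coset_mult_one[OF HG] by simp
      have "H #> x \<noteq> H"
        using rcos_self[OF x H] False by blast
      then show "card {H, H #> x} = card (rcosets H)"
        using two_cosets by simp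
    qed
    then have "carrier G = H \<union> (H #> x)"
      using rcosets_part_G[OF H] by simp
    moreover have "x \<otimes> h \<in> carrier G"
      using x h HG by blast
    moreover have "x \<otimes> h \<notin> H"
    proof
      assume "x \<otimes> h \<in> H"
      then have "x \<otimes> h \<otimes> inv h \<in> H"
        using h H by (simp add: subgroup.m_closed subgroup.m_inv_closed)
      with x h HG False show False
        by (simp add: m_assoc subsetD)
    qed
    ultimately obtain h' where "h' \<in> H" "x \<otimes> h = h' \<otimes> x"
      unfolding r_coset_def by blast
    with x h HG show ?thesis
      by (simp add: m_assoc subsetD)
  qed
qed

lemma odd_card_subgroup_square_one:
  assumes H: "subgroup H G" and odd: "odd (card H)" and y: "y \<in> H" "y \<otimes> y = \<one>"
  shows "y = \<one>"
proof -
  interpret K: group "G\<lparr>carrier := H\<rparr>"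
    by (rule subgroup_imp_group[OF H])
  have "y [^]\<^bsub>G\<lparr>carrier := H\<rparr>\<^esub> (2::nat) = \<one>\<^bsub>G\<lparr>carrier := H\<rparr>\<^esub>"
    using y subgroup.subset[OF H] by (auto simp: numeral_2_eq_2 simp flip: nat_pow_consistent)
  then have ord_2: "K.ord y dvd 2"
    using K.pow_eq_id y(1) by simp
  have "K.ord y dvd card H"
    using K.ord_dvd_group_order y(1) by (simp add: order_def)
  then have "K.ord y \<noteq> 2"
    using odd by auto
  with ord_2 have "K.ord y = 1"
    using dvd_imp_le[OF ord_2] by (cases "K.ord y") (auto simp: le_Suc_eq)
  then show ?thesis
    using K.ord_eq_1 y(1) by simp
qed

lemma cyclic_subgroup_generator:
  assumes Z: "subgroup Z G" and cyc: "is_cyclic_of_order (G\<lparr>carrier := Z\<rparr>) n" and n: "1 < n"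
  shows "\<exists>c\<in>Z. generate G {c} = Z \<and> c [^] n = \<one> \<and> c \<noteq> \<one>"
proof -
  interpret K: group "G\<lparr>carrier := Z\<rparr>"
    by (rule subgroup_imp_group[OF Z])
  obtain c where c: "c \<in> Z" "generate (G\<lparr>carrier := Z\<rparr>) {c} = Z" and card: "card Z = n"
    using cyc unfolding is_cyclic_of_order_def order_def by auto
  have ord: "K.ord c = n"
    using K.generate_pow_card c card by simp
  have "generate G {c} = Z"
    using c generate_consistent[OF _ Z] by simp
  moreover have "c [^] n = \<one>"
    using K.pow_ord_eq_1[of c] c(1) ord by (simp flip: nat_pow_consistent)
  moreover have "c \<noteq> \<one>"
    using K.ord_eq_1[of c] c(1) ord n by simp
  ultimately show ?thesis
    using c(1) by blast
qed

lemma dihedral_subgroup_involution_normalizing: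
  assumes U: "subgroup U G" and dih: "is_dihedral (G\<lparr>carrier := U\<rparr>) n"
    and Z: "subgroup Z G" "Z \<subseteq> U" "card Z = n"
  shows "\<exists>s\<in>U. s \<otimes> s = \<one> \<and> s \<noteq> \<one> \<and> (\<forall>z\<in>Z. s \<otimes> z \<otimes> inv s \<in> Z)"
proof -
  interpret K: group "G\<lparr>carrier := U\<rparr>"
    by (rule subgroup_imp_group[OF U])
  obtain s where s: "s \<in> U" "K.ord s = 2"
    using dih unfolding is_dihedral_def by auto
  then have "s [^] (2::nat) = \<one>"
    using K.pow_ord_eq_1[of s] by (simp flip: nat_pow_consistent)
  moreover have "s \<in> carrier G"
    using s(1) subgroup.subset[OF U] by blast
  ultimately have "s \<otimes> s = \<one>"
    by (simp add: numeral_2_eq_2)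
  moreover have "s \<noteq> \<one>"
    using K.ord_eq_1[of s] s by simp
  moreover have "Z \<lhd> G\<lparr>carrier := U\<rparr>"
  proof (rule K.index_two_subgroup_normal)
    show "subgroup Z (G\<lparr>carrier := U\<rparr>)"
      using subgroup_incl[OF Z(1) U Z(2)] .
  qed (use dih Z(3) in \<open>auto simp: is_dihedral_def\<close>)
  then have "\<forall>z\<in>Z. s \<otimes> z \<otimes> inv\<^bsub>G\<lparr>carrier := U\<rparr>\<^esub> s \<in> Z"
    using s(1) unfolding K.normal_inv_iff by auto
  then have "\<forall>z\<in>Z. s \<otimes> z \<otimes> inv s \<in> Z"
    using m_inv_consistent[OF U s(1)] by simp
  ultimately show ?thesis
    using s(1) by blast
qed

end

section \<open>The alternating group of degree 5\<close>

lemma funpow_mult_fixpoint: "(f ^^ m) x = x \<Longrightarrow> (f ^^ (m * k)) x = x"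
  by (induction k) (simp_all add: funpow_add)

lemma funpow_gcd_fixpoint:
  assumes m: "(f ^^ m) x = x" and n: "(f ^^ n) x = x"
  shows "(f ^^ gcd m n) x = x"
proof (cases "m = 0")
  case False
  then obtain a b where ab: "m * a = n * b + gcd m n"
    using bezout_nat by blast
  have "x = (f ^^ (gcd m n + n * b)) x"
    using funpow_mult_fixpoint[OF m, of a] ab by (simp add: add.commute)
  also have "\<dots> = (f ^^ gcd m n) x"
    using funpow_mult_fixpoint[OF n, of b] by (simp add: funpow_add)
  finally show ?thesis by simp
qed (use n in simp)

lemma funpow_prime_orbit_distinct:
  assumes p: "Factorial_Ring.prime p" and f: "f ^^ p = id" and x: "f x \<noteq> x" and kl: "k < l" "l < p"
  shows "(f ^^ k) x \<noteq> (f ^^ l) x"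
proof
  assume eq: "(f ^^ k) x = (f ^^ l) x"
  define j where "j = p - l + k"
  have "(f ^^ j) x = (f ^^ (p - l)) ((f ^^ l) x)"
    unfolding j_def funpow_add using eq by simp
  also have "\<dots> = (f ^^ (p - l + l)) x"
    by (simp add: funpow_add)
  also have "\<dots> = x"
    using f kl by simp
  finally have "(f ^^ gcd j p) x = x"
    using f by (simp add: funpow_gcd_fixpoint)
  moreover have "0 < j" "j < p"
    using kl by (auto simp: j_def)
  then have "coprime p j"
    using p by (intro prime_imp_coprime) (auto dest: dvd_imp_le)
  then have "gcd j p = 1"
    by (simp add: coprime_iff_gcd_eq_1 gcd.commute)
  ultimately show False
    using x by simp
qed

lemma alt_group_nat_pow: "x [^]\<^bsub>alt_group n\<^esub> (k::nat) = x ^^ k"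
  by (induction k) (simp_all add: alt_group_one alt_group_mult funpow_Suc_right del: funpow.simps(2))

lemma permutes_5_order_5_cycle:
  assumes perm: "x permutes {1..5::nat}" and x5: "x ^^ 5 = id" and "x \<noteq> id"
  obtains a :: "nat \<Rightarrow> nat"
  where "distinct [a 0, a 1, a 2, a 3, a 4]" "{a 0, a 1, a 2, a 3, a 4} = {1..5}"
    and "x (a 0) = a 1" "x (a 1) = a 2" "x (a 2) = a 3" "x (a 3) = a 4" "x (a 4) = a 0"
proof -
  obtain i where i: "x i \<noteq> i"
    using \<open>x \<noteq> id\<close> by (auto simp: fun_eq_iff)
  define a where "a k = (x ^^ k) i" for k
  have a_Suc: "x (a k) = a (Suc k)" for k
    by (simp add: a_def)
  have a_ne: "a k \<noteq> a l" if "k < l" "l < 5" for k l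
    using funpow_prime_orbit_distinct[of 5 x i k l] x5 i that by (simp add: a_def)
  have distinct: "distinct [a 0, a 1, a 2, a 3, a 4]"
    using a_ne[of 0 1] a_ne[of 0 2] a_ne[of 0 3] a_ne[of 0 4] a_ne[of 1 2] a_ne[of 1 3]
      a_ne[of 1 4] a_ne[of 2 3] a_ne[of 2 4] a_ne[of 3 4]
    by auto
  have a_in: "a k \<in> {1..5}" for k
  proof (induction k)
    case 0
    show ?case using i perm unfolding a_def permutes_def by auto
  next
    case (Suc k)
    then show ?case using permutes_in_image[OF perm] a_Suc by metis
  qed
  have "{a 0, a 1, a 2, a 3, a 4} = {1..5}"
  proof (rule card_subset_eq)
    show "card {a 0, a 1, a 2, a 3, a 4} = card {1..5::nat}"
      using distinct_card[OF distinct] by simp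
  qed (use a_in in auto)
  moreover have "a 5 = a 0"
    using x5 by (simp add: a_def)
  then have "x (a 0) = a 1" "x (a 1) = a 2" "x (a 2) = a 3" "x (a 3) = a 4" "x (a 4) = a 0"
    using a_Suc[of 0] a_Suc[of 1] a_Suc[of 2] a_Suc[of 3] a_Suc[of 4]
    by (simp_all add: eval_nat_numeral)
  ultimately show ?thesis
    using that distinct by blast
qed

text \<open>Numbering \<open>{1..5}\<close> along the 5-cycle x as \<open>a 0, ..., a 4\<close>, the reflection
  \<open>a k \<mapsto> a (-k)\<close> is an even involution conjugating x to its inverse.\<close>
lemma alt_group_5_order_5_inverted:
  assumes x: "x \<in> carrier (alt_group 5)" "x [^]\<^bsub>alt_group 5\<^esub> (5::nat) = \<one>\<^bsub>alt_group 5\<^esub>"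
    and nontrivial: "x \<noteq> \<one>\<^bsub>alt_group 5\<^esub>"
  shows "\<exists>\<tau>\<in>carrier (alt_group 5). \<tau> \<noteq> \<one>\<^bsub>alt_group 5\<^esub> \<and> \<tau> \<otimes>\<^bsub>alt_group 5\<^esub> \<tau> = \<one>\<^bsub>alt_group 5\<^esub> \<and>
     \<tau> \<otimes>\<^bsub>alt_group 5\<^esub> x \<otimes>\<^bsub>alt_group 5\<^esub> \<tau> \<otimes>\<^bsub>alt_group 5\<^esub> x = \<one>\<^bsub>alt_group 5\<^esub>"
proof -
  have perm: "x permutes {1..5}" and "x ^^ 5 = id" "x \<noteq> id"
    using x nontrivial by (simp_all add: alt_group_carrier alt_group_nat_pow alt_group_one)
  then obtain a :: "nat \<Rightarrow> nat" where distinct: "distinct [a 0, a 1, a 2, a 3, a 4]"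
    and orbit: "{a 0, a 1, a 2, a 3, a 4} = {1..5}"
    and x_a: "x (a 0) = a 1" "x (a 1) = a 2" "x (a 2) = a 3" "x (a 3) = a 4" "x (a 4) = a 0"
    by (rule permutes_5_order_5_cycle)
  define \<tau> where "\<tau> = transpose (a 1) (a 4) \<circ> transpose (a 2) (a 3)"
  have \<tau>_a: "\<tau> (a 0) = a 0" "\<tau> (a 1) = a 4" "\<tau> (a 2) = a 3" "\<tau> (a 3) = a 2" "\<tau> (a 4) = a 1"
    using distinct by (auto simp: \<tau>_def transpose_def)
  have outside: "x j = j" "\<tau> j = j" if "j \<notin> {1..5}" for j
  proof -
    have "j \<notin> {a 0, a 1, a 2, a 3, a 4}"
      using that orbit by simp
    then show "x j = j" "\<tau> j = j"
      using that perm by (auto simp: permutes_def \<tau>_def transpose_def)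
  qed
  have pointwise: "f = g"
    if "f (a 0) = g (a 0)" "f (a 1) = g (a 1)" "f (a 2) = g (a 2)" "f (a 3) = g (a 3)"
      "f (a 4) = g (a 4)" "\<And>j. j \<notin> {1..5} \<Longrightarrow> f j = g j"
    for f g :: "nat \<Rightarrow> nat"
  proof
    fix j
    show "f j = g j"
    proof (cases "j \<in> {1..5}")
      case True
      then have "j \<in> {a 0, a 1, a 2, a 3, a 4}"
        using orbit by simp
      then show ?thesis
        using that by auto
    qed (use that in blast)
  qed
  have "\<tau> \<circ> \<tau> = id"
    by (rule pointwise) (simp_all add: \<tau>_a[unfolded One_nat_def] outside)
  moreover have "\<tau> \<circ> x \<circ> \<tau> \<circ> x = id"
    by (rule pointwise) (simp_all add: \<tau>_a[unfolded One_nat_def] x_a[unfolded One_nat_def] outside)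
  moreover have "\<tau> \<noteq> id"
    using \<tau>_a(2) distinct by (metis id_apply distinct_length_2_or_more)
  moreover have "a 1 \<in> {1..5}" "a 2 \<in> {1..5}" "a 3 \<in> {1..5}" "a 4 \<in> {1..5}"
    unfolding orbit[symmetric] by simp_all
  then have "\<tau> \<in> carrier (alt_group 5)"
    unfolding alt_group_carrier \<tau>_def using distinct
    by (simp add: permutes_compose permutes_swap_id evenperm_comp permutation_swap_id evenperm_swap)
  ultimately show ?thesis
    by (auto simp: alt_group_mult alt_group_one)
qed

lemma iso_alt_group_5_order_5_inverted:
  assumes H: "group H" "H \<cong> alt_group 5"
    and x: "x \<in> carrier H" "x [^]\<^bsub>H\<^esub> (5::nat) = \<one>\<^bsub>H\<^esub>" "x \<noteq> \<one>\<^bsub>H\<^esub>"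
  shows "\<exists>\<tau>\<in>carrier H. \<tau> \<noteq> \<one>\<^bsub>H\<^esub> \<and> \<tau> \<otimes>\<^bsub>H\<^esub> \<tau> = \<one>\<^bsub>H\<^esub> \<and> \<tau> \<otimes>\<^bsub>H\<^esub> x \<otimes>\<^bsub>H\<^esub> \<tau> \<otimes>\<^bsub>H\<^esub> x = \<one>\<^bsub>H\<^esub>"
proof -
  obtain \<phi> where \<phi>: "\<phi> \<in> iso H (alt_group 5)"
    using H(2) unfolding is_iso_def by blast
  interpret \<phi>: group_hom H "alt_group 5" \<phi>
    using H(1) alt_group_is_group \<phi> by (simp add: group_hom_def group_hom_axioms_def iso_def)
  have inj: "inj_on \<phi> (carrier H)" and surj: "\<phi> ` carrier H = carrier (alt_group 5)"
    using \<phi> by (simp_all add: iso_iff)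
  have "\<phi> x \<in> carrier (alt_group 5)" "\<phi> x [^]\<^bsub>alt_group 5\<^esub> (5::nat) = \<one>\<^bsub>alt_group 5\<^esub>"
    using x \<phi>.hom_nat_pow[of x 5] by simp_all
  moreover have "\<phi> x \<noteq> \<one>\<^bsub>alt_group 5\<^esub>"
    using x inj inj_onD[of \<phi> _ x "\<one>\<^bsub>H\<^esub>"] by auto
  ultimately have "\<exists>\<sigma>\<in>carrier (alt_group 5). \<sigma> \<noteq> \<one>\<^bsub>alt_group 5\<^esub> \<and>
      \<sigma> \<otimes>\<^bsub>alt_group 5\<^esub> \<sigma> = \<one>\<^bsub>alt_group 5\<^esub> \<and>
      \<sigma> \<otimes>\<^bsub>alt_group 5\<^esub> \<phi> x \<otimes>\<^bsub>alt_group 5\<^esub> \<sigma> \<otimes>\<^bsub>alt_group 5\<^esub> \<phi> x = \<one>\<^bsub>alt_group 5\<^esub>"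
    by (rule alt_group_5_order_5_inverted)
  then obtain \<sigma> where \<sigma>: "\<sigma> \<in> carrier (alt_group 5)" "\<sigma> \<noteq> \<one>\<^bsub>alt_group 5\<^esub> \<and>
      \<sigma> \<otimes>\<^bsub>alt_group 5\<^esub> \<sigma> = \<one>\<^bsub>alt_group 5\<^esub> \<and>
      \<sigma> \<otimes>\<^bsub>alt_group 5\<^esub> \<phi> x \<otimes>\<^bsub>alt_group 5\<^esub> \<sigma> \<otimes>\<^bsub>alt_group 5\<^esub> \<phi> x = \<one>\<^bsub>alt_group 5\<^esub>"
    by (rule bexE)
  have "\<sigma> \<in> \<phi> ` carrier H"
    using \<sigma>(1) surj by simp
  then obtain \<tau> where \<tau>: "\<sigma> = \<phi> \<tau>" "\<tau> \<in> carrier H"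
    by (rule imageE)
  have "\<phi> (\<tau> \<otimes>\<^bsub>H\<^esub> \<tau>) = \<phi> \<one>\<^bsub>H\<^esub>" "\<phi> (\<tau> \<otimes>\<^bsub>H\<^esub> x \<otimes>\<^bsub>H\<^esub> \<tau> \<otimes>\<^bsub>H\<^esub> x) = \<phi> \<one>\<^bsub>H\<^esub>"
    using \<sigma> \<tau> x(1) by simp_all
  then have "\<tau> \<otimes>\<^bsub>H\<^esub> \<tau> = \<one>\<^bsub>H\<^esub>" "\<tau> \<otimes>\<^bsub>H\<^esub> x \<otimes>\<^bsub>H\<^esub> \<tau> \<otimes>\<^bsub>H\<^esub> x = \<one>\<^bsub>H\<^esub>"
    using inj_onD[OF inj] \<tau>(2) x(1) by simp_all
  moreover have "\<tau> \<noteq> \<one>\<^bsub>H\<^esub>"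
    using \<sigma>(2) \<tau>(1) by force
  ultimately show ?thesis
    using \<tau>(2) by blast
qed

lemma (in group) alt_group_5_subgroup_inverting_involution:
  assumes V: "subgroup V G" "G\<lparr>carrier := V\<rparr> \<cong> alt_group 5"
    and c: "c \<in> V" "c [^] (5::nat) = \<one>" "c \<noteq> \<one>"
  shows "\<exists>t\<in>V. t \<otimes> t = \<one> \<and> t \<noteq> \<one> \<and> t \<otimes> c \<otimes> inv t = inv c"
proof -
  interpret K: group "G\<lparr>carrier := V\<rparr>"
    by (rule subgroup_imp_group[OF V(1)])
  obtain t where t: "t \<in> V" "t \<noteq> \<one>" "t \<otimes> t = \<one>" "t \<otimes> c \<otimes> t \<otimes> c = \<one>"
    using iso_alt_group_5_order_5_inverted[OF K.is_group V(2), of c] c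
    by (auto simp flip: nat_pow_consistent)
  have G: "t \<in> carrier G" "c \<in> carrier G"
    using t(1) c(1) subgroup.subset[OF V(1)] by blast+
  then have "inv t = t"
    using t(3) by (simp add: inv_equality)
  moreover have "t \<otimes> c \<otimes> t = inv c"
    using t(4) G by (simp add: inv_equality[symmetric])
  ultimately show ?thesis
    using t by auto
qed


lemma (in group) D5_A5_involutions_normalizing_Z5:
  assumes U: "subgroup U G" and V: "subgroup V G"
    and dih: "is_dihedral (G\<lparr>carrier := U\<rparr>) 5" and A5: "G\<lparr>carrier := V\<rparr> \<cong> alt_group 5"
    and cyc: "is_cyclic_of_order (G\<lparr>carrier := U \<inter> V\<rparr>) 5"
  obtains c s t where "generate G {c} = U \<inter> V" "c \<in> U \<inter> V" "c [^] (5::nat) = \<one>" "c \<noteq> \<one>"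
    and "s \<in> U - U \<inter> V" "s \<otimes> s = \<one>" "s \<noteq> \<one>" "s \<otimes> c \<otimes> inv s \<in> U \<inter> V"
    and "t \<in> V - U \<inter> V" "t \<otimes> t = \<one>" "t \<noteq> \<one>" "t \<otimes> c \<otimes> inv t \<in> U \<inter> V"
proof -
  let ?Z = "U \<inter> V"
  have Z: "subgroup ?Z G"
    using U V by (rule subgroups_Inter_pair)
  have card_Z: "card ?Z = 5"
    using cyc by (simp add: is_cyclic_of_order_def order_def)
  obtain c where c: "c \<in> ?Z" "generate G {c} = ?Z" "c [^] (5::nat) = \<one>" "c \<noteq> \<one>"
    using cyclic_subgroup_generator[OF Z cyc] by auto
  obtain s where s: "s \<in> U" "s \<otimes> s = \<one>" "s \<noteq> \<one>" "s \<otimes> c \<otimes> inv s \<in> ?Z"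
    using dihedral_subgroup_involution_normalizing[OF U dih Z _ card_Z] c(1) by blast
  obtain t where t: "t \<in> V" "t \<otimes> t = \<one>" "t \<noteq> \<one>" "t \<otimes> c \<otimes> inv t = inv c"
    using alt_group_5_subgroup_inverting_involution[OF V A5] c by blast
  moreover have "inv c \<in> ?Z"
    using c(1) Z by (rule subgroup.m_inv_closed[rotated])
  moreover have "y \<notin> ?Z" if "y \<otimes> y = \<one>" "y \<noteq> \<one>" for y
    using odd_card_subgroup_square_one[OF Z] card_Z that by auto
  ultimately show ?thesis
    using that c s by auto
qed

section \<open>Amalgamated free products\<close>

lemma alternating_Cons:
  "alternating A B (x # xs) \<longleftrightarrow> alternating A B xs \<and> x \<in> A \<union> B \<and>
     (xs = [] \<or> (x \<in> A \<and> hd xs \<in> B) \<or> (x \<in> B \<and> hd xs \<in> A))"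
  unfolding alternating_def length_Cons all_Suc_less_Suc_iff by (cases xs) auto

lemma alternating_replicate:
  assumes "s \<in> A" "t \<in> B"
  shows "alternating A B (concat (replicate n [s, t]))"
proof (induction n)
  case (Suc n)
  then show ?case
    using assms by (cases n) (auto simp: alternating_Cons)
qed (simp add: alternating_def)

lemma internal_amalgam_mult_pow_ne_one:
  assumes N: "internal_amalgam N U V" and s: "s \<in> U - U \<inter> V" and t: "t \<in> V - U \<inter> V"
    and n: "0 < (n::nat)"
  shows "(s \<otimes>\<^bsub>N\<^esub> t) [^]\<^bsub>N\<^esub> n \<noteq> \<one>\<^bsub>N\<^esub>"
proof -
  interpret group N
    using N unfolding internal_amalgam_def by blast
  have st: "s \<in> carrier N" "t \<in> carrier N"
    using N s t subgroup.subset unfolding internal_amalgam_def by blast+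
  have "foldr (\<otimes>\<^bsub>N\<^esub>) (concat (replicate k [s, t])) \<one>\<^bsub>N\<^esub> = (s \<otimes>\<^bsub>N\<^esub> t) [^]\<^bsub>N\<^esub> k" for k
  proof (induction k)
    case (Suc k)
    then have "foldr (\<otimes>\<^bsub>N\<^esub>) (concat (replicate (Suc k) [s, t])) \<one>\<^bsub>N\<^esub> =
        (s \<otimes>\<^bsub>N\<^esub> t) \<otimes>\<^bsub>N\<^esub> (s \<otimes>\<^bsub>N\<^esub> t) [^]\<^bsub>N\<^esub> k"
      using st by (simp add: m_assoc)
    also have "\<dots> = (s \<otimes>\<^bsub>N\<^esub> t) [^]\<^bsub>N\<^esub> Suc k"
      using st by (simp only: nat_pow_Suc2 m_closed)
    finally show ?case .
  qed simp
  moreover have "alternating (U - U \<inter> V) (V - U \<inter> V) (concat (replicate n [s, t]))"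
    using s t by (rule alternating_replicate)
  moreover have "concat (replicate n [s, t]) \<noteq> []"
    using n by (cases n) auto
  ultimately show ?thesis
    using N unfolding internal_amalgam_def by metis
qed

section \<open>Elements of order 5 in \<open>PGL(2,k)\<close> in characteristic 5\<close>

fun tr22 :: "'k::field mat22 \<Rightarrow> 'k" where
  "tr22 (a, b, c, d) = a + d"

definition disc22 :: "'k::field mat22 \<Rightarrow> 'k" where
  "disc22 m = tr22 m ^ 2 - 4 * det22 m"

fun lucas_U :: "'k::field \<Rightarrow> 'k \<Rightarrow> nat \<Rightarrow> 'k" where
  "lucas_U t \<delta> 0 = 0"
| "lucas_U t \<delta> (Suc 0) = 1"
| "lucas_U t \<delta> (Suc (Suc n)) = t * lucas_U t \<delta> (Suc n) - \<delta> * lucas_U t \<delta> n"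

lemma mpow22_Suc_lucas_U:
  fixes a b c d :: "'k::field"
  defines "U \<equiv> lucas_U (a + d) (a * d - b * c)"
  shows "mpow22 (a, b, c, d) (Suc n) =
    (U (Suc n) * a - (a * d - b * c) * U n, U (Suc n) * b, U (Suc n) * c,
     U (Suc n) * d - (a * d - b * c) * U n)"
  by (induction n) (simp_all add: U_def algebra_simps)

lemma lucas_U_5_char_5:
  fixes t \<delta> :: "'k::field"
  assumes "(5::'k) = 0"
  shows "lucas_U t \<delta> 5 = (t^2 - 4 * \<delta>)^2"
proof -
  have "lucas_U t \<delta> 5 = (t^2 - 4 * \<delta>)^2 + 5 * (t^2 * \<delta> - 3 * \<delta>^2)"
    by (simp add: eval_nat_numeral algebra_simps)
  with assms show ?thesis by simp
qed

lemma PGL2_pow_5_char_5: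
  fixes m :: "'k::field mat22"
  assumes five: "(5::'k) = 0" and det: "det22 m \<noteq> 0"
  shows "pclass m [^]\<^bsub>PGL2\<^esub> (5::nat) = \<one>\<^bsub>PGL2\<^esub> \<longleftrightarrow> pclass m = \<one>\<^bsub>PGL2\<^esub> \<or> disc22 m = 0"
proof -
  obtain a b c d where m: "m = (a, b, c, d)"
    by (cases m)
  define \<delta> where "\<delta> = a * d - b * c"
  define D where "D = disc22 m ^ 2"
  define V where "V = \<delta> * lucas_U (a + d) \<delta> 4"
  have pow: "mpow22 m 5 = (D * a - V, D * b, D * c, D * d - V)"
    using mpow22_Suc_lucas_U[of a b c d 4] lucas_U_5_char_5[OF five, of "a + d" \<delta>]
    by (simp add: m D_def V_def \<delta>_def disc22_def del: mpow22.simps)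
  show ?thesis
  proof
    assume "pclass m [^]\<^bsub>PGL2\<^esub> (5::nat) = \<one>\<^bsub>PGL2\<^esub>"
    then obtain e where "mpow22 m 5 = (e, 0, 0, e)"
      by (auto simp: pclass_pow pclass_eq_one_iff)
    then have "D * b = 0" "D * c = 0" "D * (a - d) = 0"
      unfolding pow by (simp_all add: algebra_simps)
    then have "D = 0 \<or> (b = 0 \<and> c = 0 \<and> a = d)"
      by auto
    moreover have "a \<noteq> 0" if "b = 0" "c = 0" "a = d"
      using det that by (simp add: m)
    ultimately show "pclass m = \<one>\<^bsub>PGL2\<^esub> \<or> disc22 m = 0"
      by (auto simp: D_def m pclass_eq_one_iff)
  next
    assume "pclass m = \<one>\<^bsub>PGL2\<^esub> \<or> disc22 m = 0"
    then show "pclass m [^]\<^bsub>PGL2\<^esub> (5::nat) = \<one>\<^bsub>PGL2\<^esub>"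
    proof
      assume "disc22 m = 0"
      moreover have "det22 (mpow22 m 5) \<noteq> 0"
        using det by (simp add: det22_mpow22)
      ultimately show ?thesis
        by (auto simp: pclass_pow pclass_eq_one_iff pow D_def)
    qed (simp add: monoid.nat_pow_one[OF group.is_monoid[OF group_PGL2]])
  qed
qed

text \<open>Twice the traceless part of \<open>m\<close>; doubling avoids dividing by 2.\<close>
fun traceless22 :: "'k::field mat22 \<Rightarrow> 'k mat22" where
  "traceless22 (a, b, c, d) = (a - d, 2 * b, 2 * c, d - a)"

lemma traceless22_eq_0_iff:
  assumes "(2::'k::field) \<noteq> 0"
  shows "traceless22 m = (0, 0, 0, 0) \<longleftrightarrow> (\<exists>e::'k. m = (e, 0, 0, e))"
proof
  obtain a b c d where m: "m = (a, b, c, d)"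
    by (cases m)
  assume "traceless22 m = (0, 0, 0, 0)"
  then have "a - d = 0" "2 * b = 0" "2 * c = 0"
    by (simp_all only: m traceless22.simps prod.inject)
  with assms m show "\<exists>e. m = (e, 0, 0, e)"
    by simp
qed auto

lemma traceless22_square: "mmul22 (traceless22 m) (traceless22 m) = (disc22 m, 0, 0, disc22 m)"
  by (cases m) (simp add: disc22_def algebra_simps power2_eq_square)

lemma PGL2_generate_pencil:
  assumes det: "det22 (a, b, c, d) \<noteq> 0" and y: "y \<in> generate PGL2 {pclass (a, b, c, d)}"
  shows "\<exists>\<alpha> \<beta>. y = pclass (\<alpha> + \<beta> * a, \<beta> * b, \<beta> * c, \<alpha> + \<beta> * d)"
  using y
proof (induction rule: generate.induct)
  case one
  show ?case
    by (rule exI[of _ 1], rule exI[of _ 0]) (simp add: PGL2_one)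
next
  case (incl h)
  then show ?case
    by (intro exI[of _ 0] exI[of _ 1]) simp
next
  case (inv h)
  then show ?case
    using det by (intro exI[of _ "a + d"] exI[of _ "-1"]) (simp add: inv_pclass)
next
  case (eng h1 h2)
  then obtain \<alpha>1 \<beta>1 \<alpha>2 \<beta>2 where
    "h1 = pclass (\<alpha>1 + \<beta>1 * a, \<beta>1 * b, \<beta>1 * c, \<alpha>1 + \<beta>1 * d)"
    "h2 = pclass (\<alpha>2 + \<beta>2 * a, \<beta>2 * b, \<beta>2 * c, \<alpha>2 + \<beta>2 * d)"
    by blast
  then show ?case
    by (intro exI[of _ "\<alpha>1 * \<alpha>2 - \<beta>1 * \<beta>2 * (a * d - b * c)"]
        exI[of _ "\<alpha>1 * \<beta>2 + \<alpha>2 * \<beta>1 + \<beta>1 * \<beta>2 * (a + d)"])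
      (simp add: PGL2_mult algebra_simps)
qed

lemma traceless22_conj:
  "traceless22 (mmul22 (mmul22 x m) (adj22 x)) = mmul22 (mmul22 x (traceless22 m)) (adj22 x)"
  by (cases x; cases m) (simp add: algebra_simps)

lemma traceless22_pencil:
  "traceless22 (smul22 k (\<alpha> + \<beta> * a, \<beta> * b, \<beta> * c, \<alpha> + \<beta> * d)) =
     smul22 (k * \<beta>) (traceless22 (a, b, c, d))"
  by (simp add: algebra_simps)

text \<open>The conclusion \<open>n x n = 0\<close> says that \<open>x\<close> maps the line \<open>ker n = im n\<close> into itself.\<close>
lemma normalizes_square_zero:
  assumes n: "mmul22 n n = (0, 0, 0, 0)" and det: "det22 x \<noteq> 0"
    and conj: "mmul22 (mmul22 x n) (adj22 x) = smul22 k n"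
  shows "mmul22 (mmul22 n x) n = (0, 0, 0, 0)"
proof -
  have "smul22 (det22 x) (mmul22 x n) = mmul22 (mmul22 (mmul22 x n) (adj22 x)) x"
    by (simp add: mmul22_assoc mmul22_adj22)
  also have "\<dots> = smul22 k (mmul22 n x)"
    by (simp add: conj)
  finally have "smul22 (det22 x) (mmul22 (mmul22 n x) n) = smul22 k (mmul22 (mmul22 n n) x)"
    by (metis mmul22_assoc mmul22_smul22_right)
  then show ?thesis
    using det by (cases x; cases "mmul22 (mmul22 n x) n") (simp add: n)
qed

lemma PGL2_normalizer_cyclic_square_zero:
  assumes det: "det22 m \<noteq> 0" "det22 x \<noteq> 0" and disc: "disc22 m = 0"
    and normal: "pclass x \<otimes>\<^bsub>PGL2\<^esub> pclass m \<otimes>\<^bsub>PGL2\<^esub> inv\<^bsub>PGL2\<^esub> pclass x \<in> generate PGL2 {pclass m}"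
  shows "mmul22 (mmul22 (traceless22 m) x) (traceless22 m) = (0, 0, 0, 0)"
proof -
  obtain a b c d where m: "m = (a, b, c, d)"
    by (cases m)
  have "pclass (mmul22 (mmul22 x m) (adj22 x)) \<in> generate PGL2 {pclass (a, b, c, d)}"
    using normal det by (simp add: m inv_pclass PGL2_mult)
  then obtain \<alpha> \<beta> where "pclass (mmul22 (mmul22 x m) (adj22 x)) =
      pclass (\<alpha> + \<beta> * a, \<beta> * b, \<beta> * c, \<alpha> + \<beta> * d)"
    using PGL2_generate_pencil det(1) unfolding m by blast
  then obtain k where k: "k \<noteq> 0"
    "(\<alpha> + \<beta> * a, \<beta> * b, \<beta> * c, \<alpha> + \<beta> * d) = smul22 k (mmul22 (mmul22 x m) (adj22 x))"
    unfolding pclass_eq_iff by blast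
  then have "mmul22 (mmul22 x m) (adj22 x) = smul22 (inverse k) (\<alpha> + \<beta> * a, \<beta> * b, \<beta> * c, \<alpha> + \<beta> * d)"
    by (simp add: smul22_smul22)
  then have "mmul22 (mmul22 x (traceless22 m)) (adj22 x) = smul22 (inverse k * \<beta>) (traceless22 m)"
    by (metis m traceless22_conj traceless22_pencil)
  moreover have "mmul22 (traceless22 m) (traceless22 m) = (0, 0, 0, 0)"
    using disc by (simp add: traceless22_square)
  ultimately show ?thesis
    using det(2) normalizes_square_zero by blast
qed

lemma PGL2_involution_traceless:
  assumes "pclass x \<otimes>\<^bsub>PGL2\<^esub> pclass x = \<one>\<^bsub>PGL2\<^esub>" "pclass x \<noteq> \<one>\<^bsub>PGL2\<^esub>"
  shows "tr22 x = 0"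
proof -
  obtain a b c d where x: "x = (a, b, c, d)"
    by (cases x)
  obtain e where "e \<noteq> 0" "mmul22 x x = (e, 0, 0, e)"
    using assms(1) by (auto simp: PGL2_mult pclass_eq_one_iff)
  then have "b * (a + d) = 0" "c * (a + d) = 0" "(a - d) * (a + d) = 0"
    by (auto simp: x algebra_simps)
  moreover have "\<not> (b = 0 \<and> c = 0 \<and> a = d)"
    using assms(2) \<open>mmul22 x x = (e, 0, 0, e)\<close> \<open>e \<noteq> 0\<close>
    by (auto simp: x pclass_eq_one_iff)
  ultimately show ?thesis
    by (auto simp: x)
qed

text \<open>Traceless matrices preserving the line \<open>ker n\<close> are simultaneously triangular with
  diagonals \<open>(u, -u)\<close> and \<open>(v, -v)\<close>, so their product has the double eigenvalue \<open>u v\<close>.\<close>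
lemma disc22_mmul22_traceless_stabilizers:
  assumes n: "mmul22 n n = (0, 0, 0, 0)" "n \<noteq> (0, 0, 0, 0)" "tr22 n = 0"
    and x: "tr22 x = 0" "mmul22 (mmul22 n x) n = (0, 0, 0, 0)"
    and y: "tr22 y = 0" "mmul22 (mmul22 n y) n = (0, 0, 0, 0)"
  shows "disc22 (mmul22 x y) = 0"
proof -
  obtain n1 n2 n3 where n_def: "n = (n1, n2, n3, - n1)"
    using n(3) by (cases n) (auto simp: add_eq_0_iff)
  obtain x1 x2 x3 where x_def: "x = (x1, x2, x3, - x1)"
    using x(1) by (cases x) (auto simp: add_eq_0_iff)
  obtain y1 y2 y3 where y_def: "y = (y1, y2, y3, - y1)"
    using y(1) by (cases y) (auto simp: add_eq_0_iff)
  have disc: "disc22 (mmul22 x y) = (x2 * y3 - x3 * y2)^2 + 4 * (x1 * y2 - x2 * y1) * (x3 * y1 - x1 * y3)"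
    by (simp add: x_def y_def disc22_def algebra_simps power2_eq_square)
  show ?thesis
  proof (cases "n2 = 0")
    case False
    define u where "u = n1 / n2"
    have n1: "n1 = u * n2"
      using False by (simp add: u_def)
    have "n2 * n2 * (x3 - (u * u * x2 - 2 * u * x1)) = 0"
      using x(2) by (simp add: n_def x_def n1 algebra_simps)
    then have x3: "x3 = u * u * x2 - 2 * u * x1"
      using False by simp
    have "n2 * n2 * (y3 - (u * u * y2 - 2 * u * y1)) = 0"
      using y(2) by (simp add: n_def y_def n1 algebra_simps)
    then have y3: "y3 = u * u * y2 - 2 * u * y1"
      using False by simp
    show ?thesis
      unfolding disc x3 y3 by (simp add: power2_eq_square algebra_simps)
  next
    case True
    then have "n1 = 0" "n3 \<noteq> 0"
      using n(1,2) by (auto simp: n_def)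
    then have "x2 = 0" "y2 = 0"
      using x(2) y(2) True by (auto simp: n_def x_def y_def)
    then show ?thesis
      by (simp add: disc)
  qed
qed

lemma char_5_two_ne_zero:
  assumes "(5::'a::ring_1) = 0"
  shows "(2::'a) \<noteq> 0"
proof
  assume two: "(2::'a) = 0"
  have "(1::'a) = 5 - 2 * 2"
    by simp
  also have "\<dots> = 0"
    by (simp only: assms two mult_zero_left diff_zero)
  finally show False
    by simp
qed

lemma PGL2_char_5_normalizing_involutions_product:
  fixes c s t :: "'k::field mat22 set"
  assumes five: "(5::'k) = 0"
    and c: "c \<in> carrier PGL2" "c [^]\<^bsub>PGL2\<^esub> (5::nat) = \<one>\<^bsub>PGL2\<^esub>" "c \<noteq> \<one>\<^bsub>PGL2\<^esub>"
    and s: "s \<in> carrier PGL2" "s \<otimes>\<^bsub>PGL2\<^esub> s = \<one>\<^bsub>PGL2\<^esub>" "s \<noteq> \<one>\<^bsub>PGL2\<^esub>"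
      "s \<otimes>\<^bsub>PGL2\<^esub> c \<otimes>\<^bsub>PGL2\<^esub> inv\<^bsub>PGL2\<^esub> s \<in> generate PGL2 {c}"
    and t: "t \<in> carrier PGL2" "t \<otimes>\<^bsub>PGL2\<^esub> t = \<one>\<^bsub>PGL2\<^esub>" "t \<noteq> \<one>\<^bsub>PGL2\<^esub>"
      "t \<otimes>\<^bsub>PGL2\<^esub> c \<otimes>\<^bsub>PGL2\<^esub> inv\<^bsub>PGL2\<^esub> t \<in> generate PGL2 {c}"
  shows "(s \<otimes>\<^bsub>PGL2\<^esub> t) [^]\<^bsub>PGL2\<^esub> (5::nat) = \<one>\<^bsub>PGL2\<^esub>"
proof -
  have two: "(2::'k) \<noteq> 0"
    using five by (rule char_5_two_ne_zero)
  obtain m where m: "det22 m \<noteq> 0" "c = pclass m"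
    using c(1) unfolding PGL2_carrier by blast
  obtain x where x: "det22 x \<noteq> 0" "s = pclass x"
    using s(1) unfolding PGL2_carrier by blast
  obtain y where y: "det22 y \<noteq> 0" "t = pclass y"
    using t(1) unfolding PGL2_carrier by blast
  have disc: "disc22 m = 0"
    using PGL2_pow_5_char_5[OF five m(1)] c(2,3) unfolding m(2) by simp
  let ?n = "traceless22 m"
  have n_nonzero: "?n \<noteq> (0, 0, 0, 0)"
  proof
    assume "?n = (0, 0, 0, 0)"
    then obtain e where "m = (e, 0, 0, e)"
      using traceless22_eq_0_iff[OF two] by blast
    with m c(3) show False
      by (auto simp: pclass_eq_one_iff)
  qed
  have n_square: "mmul22 ?n ?n = (0, 0, 0, 0)"
    using disc by (simp add: traceless22_square)
  have n_tr: "tr22 ?n = 0"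
    by (cases m) simp
  have x_tr: "tr22 x = 0" and y_tr: "tr22 y = 0"
    using PGL2_involution_traceless[of x] PGL2_involution_traceless[of y] s(2,3) t(2,3) x(2) y(2)
    by simp_all
  have "mmul22 (mmul22 ?n x) ?n = (0, 0, 0, 0)"
    using PGL2_normalizer_cyclic_square_zero[OF m(1) x(1) disc] s(4) m(2) x(2) by simp
  moreover have "mmul22 (mmul22 ?n y) ?n = (0, 0, 0, 0)"
    using PGL2_normalizer_cyclic_square_zero[OF m(1) y(1) disc] t(4) m(2) y(2) by simp
  ultimately have "disc22 (mmul22 x y) = 0"
    using disc22_mmul22_traceless_stabilizers[OF n_square n_nonzero n_tr x_tr _ y_tr] by blast
  moreover have "det22 (mmul22 x y) \<noteq> 0"
    using x y by (simp add: det22_mmul22)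
  ultimately show ?thesis
    using PGL2_pow_5_char_5[OF five, of "mmul22 x y"] x(2) y(2) by (simp add: PGL2_mult)
qed

lemma PGL2_char_5_not_D5_amalg_Z5_A5:
  fixes H :: "'k::field mat22 set set"
  assumes five: "(5::'k) = 0" and H: "subgroup H PGL2"
  shows "\<not> iso_D5_amalg_Z5_A5 (PGL2\<lparr>carrier := H\<rparr>)"
proof
  interpret PGL2: group "PGL2 :: 'k mat22 set monoid"
    by (rule group_PGL2)
  assume "iso_D5_amalg_Z5_A5 (PGL2\<lparr>carrier := H\<rparr>)"
  then obtain U V where amalg: "internal_amalgam (PGL2\<lparr>carrier := H\<rparr>) U V"
    and dih: "is_dihedral (PGL2\<lparr>carrier := U\<rparr>) 5" and A5: "PGL2\<lparr>carrier := V\<rparr> \<cong> alt_group 5"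
    and cyc: "is_cyclic_of_order (PGL2\<lparr>carrier := U \<inter> V\<rparr>) 5"
    unfolding iso_D5_amalg_Z5_A5_def by auto
  have U: "subgroup U PGL2" and V: "subgroup V PGL2"
    using amalg PGL2.incl_subgroup[OF H] unfolding internal_amalgam_def by auto
  obtain c s t where c: "generate PGL2 {c} = U \<inter> V" "c \<in> U \<inter> V"
      "c [^]\<^bsub>PGL2\<^esub> (5::nat) = \<one>\<^bsub>PGL2\<^esub>" "c \<noteq> \<one>\<^bsub>PGL2\<^esub>"
    and s: "s \<in> U - U \<inter> V" "s \<otimes>\<^bsub>PGL2\<^esub> s = \<one>\<^bsub>PGL2\<^esub>" "s \<noteq> \<one>\<^bsub>PGL2\<^esub>"
      "s \<otimes>\<^bsub>PGL2\<^esub> c \<otimes>\<^bsub>PGL2\<^esub> inv\<^bsub>PGL2\<^esub> s \<in> U \<inter> V"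
    and t: "t \<in> V - U \<inter> V" "t \<otimes>\<^bsub>PGL2\<^esub> t = \<one>\<^bsub>PGL2\<^esub>" "t \<noteq> \<one>\<^bsub>PGL2\<^esub>"
      "t \<otimes>\<^bsub>PGL2\<^esub> c \<otimes>\<^bsub>PGL2\<^esub> inv\<^bsub>PGL2\<^esub> t \<in> U \<inter> V"
    by (rule PGL2.D5_A5_involutions_normalizing_Z5[OF U V dih A5 cyc])
  have "c \<in> carrier PGL2" "s \<in> carrier PGL2" "t \<in> carrier PGL2"
    using c(2) s(1) t(1) U V subgroup.subset by blast+
  then have "(s \<otimes>\<^bsub>PGL2\<^esub> t) [^]\<^bsub>PGL2\<^esub> (5::nat) = \<one>\<^bsub>PGL2\<^esub>"
    using PGL2_char_5_normalizing_involutions_product[OF five] c s t by simp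
  moreover have "(s \<otimes>\<^bsub>PGL2\<^esub> t) [^]\<^bsub>PGL2\<^esub> (5::nat) \<noteq> \<one>\<^bsub>PGL2\<^esub>"
    using internal_amalgam_mult_pow_ne_one[OF amalg s(1) t(1), of 5]
    by (simp flip: PGL2.nat_pow_consistent)
  ultimately show False
    by contradiction
qed

theorem lemma2p3:
  fixes v :: "'k::field \<Rightarrow> real" and \<Gamma> :: "'k mat22 set set" and g :: nat
  assumes "nonarch_valued_field v"
    and "CHAR('k) = 0 \<longrightarrow> residue_char v = 0 \<or> residue_char v > 5"
    and "schottky_group v \<Gamma> g"
    and "g \<in> {5, 6, 7, 8}"
    and "order (aut_group \<Gamma>) = 12 * (g - 1)"
    and "iso_D5_amalg_Z5_A5 (normalizer_group \<Gamma>)"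
  shows "g = 6 \<and> CHAR('k) \<noteq> 5 \<and> aut_group \<Gamma> \<cong> alt_group 5"
proof -
  interpret PGL2: group "PGL2 :: 'k mat22 set monoid"
    by (rule group_PGL2)
  let ?N = "normalizer PGL2 \<Gamma>"
  have \<Gamma>: "subgroup \<Gamma> PGL2" "torsion_free PGL2 \<Gamma>"
    using assms(3) PGL2.free_subgroup_torsion_free
    unfolding schottky_group_def free_subgroup_of_rank_def by blast+
  have N: "subgroup ?N PGL2"
    using PGL2.normalizer_imp_subgroup subgroup.subset[OF \<Gamma>(1)] by blast
  obtain U V where "internal_amalgam (PGL2\<lparr>carrier := ?N\<rparr>) U V"
    and A5: "PGL2\<lparr>carrier := ?N\<rparr>\<lparr>carrier := V\<rparr> \<cong> alt_group 5"
    using assms(6) unfolding iso_D5_amalg_Z5_A5_def normalizer_group_def by blast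
  then have V: "subgroup V (PGL2\<lparr>carrier := ?N\<rparr>)"
    unfolding internal_amalgam_def by blast
  have "torsion_free (PGL2\<lparr>carrier := ?N\<rparr>) \<Gamma>"
    using \<Gamma>(2) by (simp add: torsion_free_def flip: PGL2.nat_pow_consistent)
  note part1 = group.torsion_free_Mod_alt_group_5[OF PGL2.subgroup_imp_group[OF N]
      PGL2.subgroup_in_normalizer[OF \<Gamma>(1)] this V A5 _ assms(4)]
  have "CHAR('k) \<noteq> 5"
  proof
    assume "CHAR('k) = 5"
    then have "(5::'k) = 0"
      using of_nat_CHAR[where 'a='k] by simp
    then show False
      using PGL2_char_5_not_D5_amalg_Z5_A5[OF _ N] assms(6) by (simp add: normalizer_group_def)
  qed
  then show ?thesis
    using part1 assms(5) by (simp add: aut_group_def normalizer_group_def)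
qed

end
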